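(* Let $P=\Bbbk[x_1,x_2,x_3]$ with Poisson bracket $\{x_1,x_2\}=0$, $\{x_2,x_3\}=3x_1^2$, $\{x_3,x_1\}=0$. If $G$ is a nontrivial finite subgroup of $\mathrm{PAut}_{\mathrm{gr}}(P)$ generated by Poisson reflections, then the invariant subalgebra $P^G$ is not isomorphic to $P$ as Poisson algebras.
   Context: $\Bbbk$ is algebraically closed of characteristic $0$; $P$ has the standard grading. $\mathrm{PAut}_{\mathrm{gr}}(P)$ is the group of degree-preserving bijective algebra homomorphisms preserving the bracket. A Poisson reflection is a finite-order $\phi\in\mathrm{PAut}_{\mathrm{gr}}(P)$ such that $\phi|_{P_1}$ has eigenvalues $1,1,\xi$ with $\xi\neq1$ a primitive root of unity. $P^G=\{a\in P:\phi(a)=a\ \forall \phi\in G\}$ with the restricted bracket. *)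

theory Defs
  imports "HOL-Library.Poly_Mapping" "HOL-Library.Numeral_Type" "Jordan_Normal_Form.Char_Poly"
begin

text \<open>The polynomial ring P = k[x1,x2,x3]: finitely supported maps from exponent vectors
  (monomials in the three variables indexed by the type 3 = {0,1,2}) to coefficients.
  Variable x1 is index 0, x2 is index 1, x3 is index 2.\<close>

type_synonym 'a P3 = "(3 \<Rightarrow>\<^sub>0 nat) \<Rightarrow>\<^sub>0 'a"

definition Var :: "3 \<Rightarrow> 'a::comm_ring_1 P3" where
  "Var i = Poly_Mapping.single (Poly_Mapping.single i 1) 1"

definition Const :: "'a::comm_ring_1 \<Rightarrow> 'a P3" where
  "Const c = Poly_Mapping.single 0 c"

definition mon_deg :: "(3 \<Rightarrow>\<^sub>0 nat) \<Rightarrow> nat" where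
  "mon_deg m = (\<Sum>i\<in>UNIV. Poly_Mapping.lookup m i)"

definition homog :: "nat \<Rightarrow> 'a::comm_ring_1 P3 set" where
  "homog d = {p. \<forall>m\<in>Poly_Mapping.keys p. mon_deg m = d}"

definition poisson_bracket :: "('a::comm_ring_1 P3 \<Rightarrow> 'a P3 \<Rightarrow> 'a P3) \<Rightarrow> bool" where
  "poisson_bracket br \<longleftrightarrow>
     (\<forall>a b c. br (a + b) c = br a c + br b c) \<and>
     (\<forall>a c s. br (Const s * a) c = Const s * br a c) \<and>
     (\<forall>a b. br a b = - br b a) \<and>
     (\<forall>a b c. br a (b * c) = br a b * c + b * br a c) \<and>
     (\<forall>a b c. br a (br b c) + br b (br c a) + br c (br a b) = 0)"

definition PAut_gr :: "('a::comm_ring_1 P3 \<Rightarrow> 'a P3 \<Rightarrow> 'a P3) \<Rightarrow> ('a P3 \<Rightarrow> 'a P3) set" where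
  "PAut_gr br = {\<phi>. bij \<phi> \<and>
     (\<forall>a b. \<phi> (a + b) = \<phi> a + \<phi> b) \<and>
     (\<forall>a b. \<phi> (a * b) = \<phi> a * \<phi> b) \<and>
     (\<forall>c. \<phi> (Const c) = Const c) \<and>
     (\<forall>d. \<forall>p\<in>homog d. \<phi> p \<in> homog d) \<and>
     (\<forall>a b. \<phi> (br a b) = br (\<phi> a) (\<phi> b))}"

text \<open>Matrix of \<phi> restricted to P_1 with respect to the basis x1,x2,x3:
  column j holds the coordinates of \<phi>(x_(j+1)).\<close>
definition lin_matrix :: "('a::comm_ring_1 P3 \<Rightarrow> 'a P3) \<Rightarrow> 'a mat" where
  "lin_matrix \<phi> = mat 3 3 (\<lambda>(i, j).
      Poly_Mapping.lookup (\<phi> (Var (of_nat j))) (Poly_Mapping.single (of_nat i :: 3) 1))"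

definition poisson_reflection ::
  "('a::comm_ring_1 P3 \<Rightarrow> 'a P3 \<Rightarrow> 'a P3) \<Rightarrow> ('a P3 \<Rightarrow> 'a P3) \<Rightarrow> bool" where
  "poisson_reflection br \<phi> \<longleftrightarrow> \<phi> \<in> PAut_gr br \<and> (\<exists>n>0. \<phi> ^^ n = id) \<and>
     (\<exists>\<xi>. \<xi> \<noteq> 1 \<and> (\<exists>k>0. \<xi> ^ k = 1) \<and>
          char_poly (lin_matrix \<phi>) = [:-1, 1:] ^ 2 * [:-\<xi>, 1:])"

text \<open>Subgroup generated by a set R of automorphisms of finite order (the monoid generated
  by R under composition; inverses are powers).\<close>
inductive_set gen_by :: "('b \<Rightarrow> 'b) set \<Rightarrow> ('b \<Rightarrow> 'b) set" for R where
  gen_id: "id \<in> gen_by R"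
| gen_step: "r \<in> R \<Longrightarrow> g \<in> gen_by R \<Longrightarrow> r \<circ> g \<in> gen_by R"

definition invariants :: "('b \<Rightarrow> 'b) set \<Rightarrow> 'b set" where
  "invariants G = {a. \<forall>\<phi>\<in>G. \<phi> a = a}"

definition poisson_iso_onto_P ::
  "('a::comm_ring_1 P3 \<Rightarrow> 'a P3 \<Rightarrow> 'a P3) \<Rightarrow> 'a P3 set \<Rightarrow> ('a P3 \<Rightarrow> 'a P3) \<Rightarrow> bool" where
  "poisson_iso_onto_P br A \<psi> \<longleftrightarrow> bij_betw \<psi> A UNIV \<and>
     (\<forall>a\<in>A. \<forall>b\<in>A. \<psi> (a + b) = \<psi> a + \<psi> b) \<and>
     (\<forall>a\<in>A. \<forall>b\<in>A. \<psi> (a * b) = \<psi> a * \<psi> b) \<and>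
     (\<forall>c. \<psi> (Const c) = Const c) \<and>
     (\<forall>a\<in>A. \<forall>b\<in>A. \<psi> (br a b) = br (\<psi> a) (\<psi> b))"

end

theory Submission
  imports Defs
begin

text \<open>
  The variable x1 is a Casimir and every bracket is divisible by x1^2. A graded Poisson
  automorphism therefore maps x1 to c x1, and applying it to {x2, x3} = 3 x1^2 shows that its
  action on x2, x3 modulo x1 has determinant c^2. For a Poisson reflection the characteristic
  polynomial then forces c = -1 and a unipotent action modulo x1, which is trivial because it has
  finite order in characteristic 0: r maps x1 -> -x1, x2 -> x2 + a x1, x3 -> x3 + a' x1. Two such
  reflections generate a finite group only if they coincide, so G = {1, r} and P^G is the fixed
  ring of r.

  Consider the property of a Poisson algebra A: if u^2 = c {p, q} with p, q, c in A, then also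
  u = c' {p', q'} with p', q', c' in A. It is preserved by Poisson isomorphisms. The polynomial
  ring P lacks it, since x1^2 = {x2, x3}/3 while x1 is not divisible by x1^2. The fixed ring of r
  has it: x1^2 divides u^2, hence x1 divides u, and since r negates x1 and is the identity modulo
  x1, r-invariance of u forces u = x1^2 w with w invariant; then u = (w/3) {y, z} for the
  invariant coordinates y = x2 + a x1/2 and z = x3 + a' x1/2.
\<close>

section \<open>Polynomials in three variables\<close>

abbreviation var_exp :: "3 \<Rightarrow> (3 \<Rightarrow>\<^sub>0 nat)" where
  "var_exp i \<equiv> Poly_Mapping.single i 1"

lemma exhaust_3: fixes i :: 3 shows "i = 0 \<or> i = 1 \<or> i = 2"
proof (induct i)
  case (of_int z)
  then have "z = 0 \<or> z = 1 \<or> z = 2" by fastforce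
  then show ?case by auto
qed

lemma forall_3: "(\<forall>i::3. P i) \<longleftrightarrow> P 0 \<and> P 1 \<and> P 2"
  by (metis exhaust_3)

lemma sum_UNIV_3: "(\<Sum>i\<in>UNIV. f i) = f 0 + f 1 + f (2::3)"
proof -
  have UNIV_3: "(UNIV :: 3 set) = {0, 1, 2}" using exhaust_3 by auto
  show ?thesis unfolding UNIV_3 by (simp add: add.assoc)
qed

lemma single_eq_single_iff:
  "Poly_Mapping.single i k = Poly_Mapping.single j k \<longleftrightarrow> i = j \<or> k = (0::'b::zero)"
  by (metis lookup_single_eq lookup_single_not_eq single_zero)

lemma update_eq_add_single:
  "a \<notin> Poly_Mapping.keys f \<Longrightarrow> Poly_Mapping.update a b f = f + Poly_Mapping.single a b"
  by (rule poly_mapping_eqI)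
    (auto simp add: lookup_update lookup_add lookup_single in_keys_iff when_def)

lemma Const_0 [simp]: "Const 0 = 0"
  and Const_1 [simp]: "Const 1 = 1"
  and Const_add: "Const (a + b) = Const a + Const b"
  and Const_mult: "Const (a * b) = Const a * Const b"
  and Const_uminus: "Const (- a) = - Const a"
  and Const_diff: "Const (a - b) = Const a - Const b"
  by (simp_all add: Const_def single_add mult_single single_uminus single_diff)

lemma Const_power: "Const (a ^ n) = Const a ^ n"
  by (induction n) (simp_all add: Const_mult)

lemma Const_mult_single: "Const c * Poly_Mapping.single m d = Poly_Mapping.single m (c * d)"
  by (simp add: Const_def mult_single)

lemma Var_power: "Var i ^ k = Poly_Mapping.single (Poly_Mapping.single i k) (1::'a::comm_ring_1)"
proof (induction k)
  case (Suc k)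
  have "Var i ^ Suc k = Var i * Poly_Mapping.single (Poly_Mapping.single i k) (1::'a)"
    using Suc by simp
  also have "\<dots> = Poly_Mapping.single (var_exp i + Poly_Mapping.single i k) (1 * 1)"
    by (simp only: Var_def mult_single)
  finally show ?case by (simp add: single_add[symmetric])
qed simp

lemma P3_induct [case_names Const Var add mult]:
  fixes Q :: "'a::comm_ring_1 P3 \<Rightarrow> bool"
  assumes Const: "\<And>c. Q (Const c)" and Var: "\<And>i. Q (Var i)"
    and add: "\<And>p q. Q p \<Longrightarrow> Q q \<Longrightarrow> Q (p + q)"
    and mult: "\<And>p q. Q p \<Longrightarrow> Q q \<Longrightarrow> Q (p * q)"
  shows "Q p"
proof -
  have Q_Var_power: "Q (Var i ^ k)" for i k
    by (induction k) (use Const[of 1] Var mult in auto)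
  have monomial: "Q (Poly_Mapping.single m 1)" for m
  proof (induction m rule: update_induct)
    case const then show ?case using Const[of 1] by (simp add: Const_def)
  next
    case (update f a b)
    have "Poly_Mapping.single (Poly_Mapping.update a b f) (1::'a) = Poly_Mapping.single f 1 * Var a ^ b"
      by (simp add: update_eq_add_single[OF update(1)] mult_single Var_power)
    then show ?case using mult[OF update(3) Q_Var_power] by simp
  qed
  show ?thesis
  proof (induction p rule: update_induct)
    case const then show ?case using Const[of 0] by simp
  next
    case (update f a b)
    have "Poly_Mapping.update a b f = f + Const b * Poly_Mapping.single a 1"
      by (simp add: update_eq_add_single[OF update(1)] Const_mult_single)
    then show ?case using add[OF update(3) mult[OF Const monomial]] by simp
  qed
qed

lemma P3_hom_eqI:
  fixes \<phi> \<psi> :: "'a::comm_ring_1 P3 \<Rightarrow> 'b::comm_ring_1 P3"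
  assumes "\<And>a b. \<phi> (a + b) = \<phi> a + \<phi> b" "\<And>a b. \<phi> (a * b) = \<phi> a * \<phi> b"
    and "\<And>a b. \<psi> (a + b) = \<psi> a + \<psi> b" "\<And>a b. \<psi> (a * b) = \<psi> a * \<psi> b"
    and "\<And>c. \<phi> (Const c) = \<psi> (Const c)" "\<And>i. \<phi> (Var i) = \<psi> (Var i)"
  shows "\<phi> = \<psi>"
proof
  show "\<phi> p = \<psi> p" for p
    by (induction p rule: P3_induct) (simp_all add: assms)
qed

lemma Var_neq_0 [simp]: "Var i \<noteq> (0 :: 'a::comm_ring_1 P3)"
  by (metis Var_def lookup_single_eq lookup_zero one_neq_zero)

lemma Const_mult_Var_power_eq_iff:
  "Const c * Var i ^ k = Const d * (Var i ^ k :: 'a::comm_ring_1 P3) \<longleftrightarrow> c = d"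
  by (metis Var_power Const_mult_single lookup_single_eq mult.right_neutral)

lemma Const_eq_0_iff [simp]: "Const c = 0 \<longleftrightarrow> c = 0"
  unfolding Const_def by (metis lookup_single_eq lookup_zero single_zero)

lemma mon_deg_single: "mon_deg (Poly_Mapping.single i k) = k"
  unfolding mon_deg_def lookup_single when_def by (simp only: sum.delta' finite UNIV_I if_True)

lemma Var_homog_1: "Var i \<in> homog 1"
  unfolding homog_def Var_def by (simp add: mon_deg_single)

lemma mon_deg_eq_1: assumes "mon_deg m = 1" shows "\<exists>i. m = var_exp i"
proof -
  have eq: "m = var_exp i" if "Poly_Mapping.lookup m i = 1" "\<forall>j. j \<noteq> i \<longrightarrow> Poly_Mapping.lookup m j = 0" for i
    by (rule poly_mapping_eqI) (use that in \<open>auto simp: lookup_single when_def\<close>)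
  have "Poly_Mapping.lookup m 0 + Poly_Mapping.lookup m 1 + Poly_Mapping.lookup m 2 = 1"
    using assms by (simp add: mon_deg_def sum_UNIV_3)
  then consider
      "Poly_Mapping.lookup m 0 = 1" "Poly_Mapping.lookup m 1 = 0" "Poly_Mapping.lookup m 2 = 0"
    | "Poly_Mapping.lookup m 0 = 0" "Poly_Mapping.lookup m 1 = 1" "Poly_Mapping.lookup m 2 = 0"
    | "Poly_Mapping.lookup m 0 = 0" "Poly_Mapping.lookup m 1 = 0" "Poly_Mapping.lookup m 2 = 1"
    by linarith
  then show ?thesis
    by cases (use eq in \<open>force simp: forall_3\<close>)+
qed

definition lin_form :: "'a \<times> 'a \<times> 'a \<Rightarrow> 'a::comm_ring_1 P3" where
  "lin_form c = (case c of (c0, c1, c2) \<Rightarrow> Const c0 * Var 0 + Const c1 * Var 1 + Const c2 * Var 2)"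

lemma lookup_lin_form:
  "Poly_Mapping.lookup (lin_form (c0, c1, c2)) (var_exp 0) = c0"
  "Poly_Mapping.lookup (lin_form (c0, c1, c2)) (var_exp 1) = c1"
  "Poly_Mapping.lookup (lin_form (c0, c1, c2)) (var_exp 2) = c2"
  by (simp_all add: lin_form_def Var_def Const_mult_single lookup_add lookup_single when_def
      single_eq_single_iff)

lemma lin_form_inject: "lin_form c = lin_form d \<longleftrightarrow> c = d"
  by (cases c; cases d) (metis lookup_lin_form)

lemma Var_eq_lin_form: "Var 0 = lin_form (1, 0, 0)" "Var 1 = lin_form (0, 1, 0)" "Var 2 = lin_form (0, 0, 1)"
  by (simp_all add: lin_form_def)

lemma homog_1_eq_lin_form:
  assumes "p \<in> homog 1"
  shows "p = lin_form (Poly_Mapping.lookup p (var_exp 0), Poly_Mapping.lookup p (var_exp 1),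
    Poly_Mapping.lookup p (var_exp 2))" (is "p = lin_form ?c")
proof (rule poly_mapping_eqI)
  fix m
  show "Poly_Mapping.lookup p m = Poly_Mapping.lookup (lin_form ?c) m"
  proof (cases "\<exists>i. m = var_exp i")
    case True
    then obtain i where "m = var_exp i" by blast
    then show ?thesis using exhaust_3[of i] by (auto simp only: lookup_lin_form)
  next
    case False
    then have "m \<notin> Poly_Mapping.keys p" using assms mon_deg_eq_1 by (auto simp: homog_def)
    with False show ?thesis
      by (auto simp: in_keys_iff lin_form_def Var_def Const_mult_single lookup_add lookup_single when_def)
  qed
qed

section \<open>Divisibility by a variable\<close>

definition subst_zero :: "3 \<Rightarrow> 'a::comm_ring_1 P3 \<Rightarrow> 'a P3" where
  "subst_zero i p = Poly_Mapping.mapp (\<lambda>m c. if Poly_Mapping.lookup m i = 0 then c else 0) p"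

lemma lookup_subst_zero:
  "Poly_Mapping.lookup (subst_zero i p) m =
    (if Poly_Mapping.lookup m i = 0 then Poly_Mapping.lookup p m else 0)"
  by (simp add: subst_zero_def lookup_mapp when_def in_keys_iff)

lemma subst_zero_add: "subst_zero i (p + q) = subst_zero i p + subst_zero i q"
  and subst_zero_uminus: "subst_zero i (- p) = - subst_zero i p"
  and subst_zero_idem: "subst_zero i (subst_zero i p) = subst_zero i p"
  and subst_zero_Const: "subst_zero i (Const c) = Const c"
  and subst_zero_Var: "subst_zero i (Var j) = (if j = i then 0 else Var j)"
  by (rule poly_mapping_eqI;
      auto simp: lookup_subst_zero lookup_add Const_def Var_def lookup_single when_def)+

lemma lookup_Var_mult:
  "Poly_Mapping.lookup (Var i * v) m =
    (if Poly_Mapping.lookup m i = 0 then 0 else Poly_Mapping.lookup v (m - var_exp i))"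
proof (induction v rule: update_induct)
  case (update f a b)
  have shift: "var_exp i + a = m \<longleftrightarrow> Poly_Mapping.lookup m i \<noteq> 0 \<and> a = m - var_exp i"
  proof
    assume "var_exp i + a = m"
    then show "Poly_Mapping.lookup m i \<noteq> 0 \<and> a = m - var_exp i" by (auto simp: lookup_add)
  next
    assume "Poly_Mapping.lookup m i \<noteq> 0 \<and> a = m - var_exp i"
    then show "var_exp i + a = m"
      by (intro poly_mapping_eqI) (auto simp: lookup_add lookup_minus lookup_single when_def)
  qed
  have "Var i * Poly_Mapping.update a b f = Var i * f + Poly_Mapping.single (var_exp i + a) b"
    by (simp add: update_eq_add_single[OF update(1)] distrib_left Var_def mult_single)
  then show ?case using update(3) shift
    by (auto simp: lookup_add lookup_single when_def update_eq_add_single[OF update(1)])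
qed simp

lemma subst_zero_Var_mult: "subst_zero i (Var i * q) = 0"
  by (rule poly_mapping_eqI) (simp add: lookup_subst_zero lookup_Var_mult)

lemma Var_dvd_iff_subst_zero: "Var i dvd p \<longleftrightarrow> subst_zero i p = 0"
proof
  assume "subst_zero i p = 0"
  define v where "v = Abs_poly_mapping (\<lambda>m. Poly_Mapping.lookup p (m + var_exp i))"
  have "{m. Poly_Mapping.lookup p (m + var_exp i) \<noteq> 0} \<subseteq> (\<lambda>k. k - var_exp i) ` Poly_Mapping.keys p"
    by (force simp: in_keys_iff)
  then have "finite {m. Poly_Mapping.lookup p (m + var_exp i) \<noteq> 0}"
    by (rule finite_subset) simp
  then have lookup_v: "Poly_Mapping.lookup v m = Poly_Mapping.lookup p (m + var_exp i)" for m
    by (simp add: v_def)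
  have "p = Var i * v"
  proof (rule poly_mapping_eqI)
    fix m
    show "Poly_Mapping.lookup p m = Poly_Mapping.lookup (Var i * v) m"
    proof (cases "Poly_Mapping.lookup m i = 0")
      case True
      then show ?thesis using \<open>subst_zero i p = 0\<close>
        by (metis lookup_Var_mult lookup_subst_zero lookup_zero)
    next
      case False
      then have "m - var_exp i + var_exp i = m"
        by (intro poly_mapping_eqI) (auto simp: lookup_add lookup_minus lookup_single when_def)
      with False show ?thesis by (simp add: lookup_Var_mult lookup_v)
    qed
  qed
  then show "Var i dvd p" ..
qed (auto simp: subst_zero_Var_mult)

lemma Var_dvd_sub_subst_zero: "Var i dvd p - subst_zero i p"
  unfolding Var_dvd_iff_subst_zero
  by (rule poly_mapping_eqI) (simp add: lookup_subst_zero lookup_minus)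

lemma subst_zero_mult: "subst_zero i (p * q) = subst_zero i p * subst_zero i q"
proof -
  have pure: "subst_zero i (p' * q') = p' * q'"
    if p': "subst_zero i p' = p'" and q': "subst_zero i q' = q'" for p' q' :: "'a P3"
  proof (rule poly_mapping_eqI)
    fix m
    have "m \<notin> Poly_Mapping.keys (p' * q')" if "Poly_Mapping.lookup m i \<noteq> 0"
    proof
      assume "m \<in> Poly_Mapping.keys (p' * q')"
      then obtain k l where "m = k + l" "k \<in> Poly_Mapping.keys p'" "l \<in> Poly_Mapping.keys q'"
        using keys_mult by blast
      moreover have "Poly_Mapping.lookup k i = 0" if "k \<in> Poly_Mapping.keys p'" for k
        using that p' by (metis in_keys_iff lookup_subst_zero)
      moreover have "Poly_Mapping.lookup l i = 0" if "l \<in> Poly_Mapping.keys q'" for l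
        using that q' by (metis in_keys_iff lookup_subst_zero)
      ultimately show False using \<open>Poly_Mapping.lookup m i \<noteq> 0\<close> by (simp add: lookup_add)
    qed
    then show "Poly_Mapping.lookup (subst_zero i (p' * q')) m = Poly_Mapping.lookup (p' * q') m"
      by (auto simp: lookup_subst_zero in_keys_iff)
  qed
  obtain v w where v: "p = subst_zero i p + Var i * v" and w: "q = subst_zero i q + Var i * w"
    using Var_dvd_sub_subst_zero by (metis diff_add_cancel dvdE add.commute)
  have "p * q = subst_zero i p * subst_zero i q + Var i * (v * subst_zero i q + subst_zero i p * w + Var i * v * w)"
    by (subst v, subst w) (simp add: algebra_simps)
  then show ?thesis by (simp add: subst_zero_add subst_zero_Var_mult pure subst_zero_idem)
qed

lemma subst_zero_0_lin_form: "subst_zero 0 (lin_form (c0, c1, c2)) = lin_form (0, c1, c2)"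
  by (simp add: lin_form_def subst_zero_add subst_zero_mult subst_zero_Const subst_zero_Var)

lemma Var_dvd_mult_iff:
  "Var i dvd p * q \<longleftrightarrow> Var i dvd p \<or> Var i dvd (q :: 'a::idom P3)"
  by (simp add: Var_dvd_iff_subst_zero subst_zero_mult)

lemma Var_not_dvd_one: "\<not> Var i dvd (1 :: 'a::comm_ring_1 P3)"
  using subst_zero_Const[of i "1::'a"] by (simp add: Var_dvd_iff_subst_zero)

section \<open>The linear part of a graded automorphism\<close>

lemma
  assumes "\<phi> \<in> PAut_gr br"
  shows PAut_gr_add: "\<phi> (a + b) = \<phi> a + \<phi> b"
    and PAut_gr_mult: "\<phi> (a * b) = \<phi> a * \<phi> b"
    and PAut_gr_Const: "\<phi> (Const c) = Const c"
    and PAut_gr_br: "\<phi> (br a b) = br (\<phi> a) (\<phi> b)"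
    and PAut_gr_bij: "bij \<phi>"
    and PAut_gr_homog: "p \<in> homog d \<Longrightarrow> \<phi> p \<in> homog d"
  using assms unfolding PAut_gr_def by blast+

lemma
  fixes \<phi> :: "'a::comm_ring_1 P3 \<Rightarrow> 'a P3"
  assumes "\<phi> \<in> PAut_gr br"
  shows PAut_gr_zero: "\<phi> 0 = 0"
    and PAut_gr_Const_mult: "\<phi> (Const c * a) = Const c * \<phi> a"
    and PAut_gr_power: "\<phi> (a ^ n) = \<phi> a ^ n"
proof -
  show "\<phi> 0 = 0" using PAut_gr_Const[OF assms, of 0] by simp
  show "\<phi> (Const c * a) = Const c * \<phi> a" by (simp add: PAut_gr_mult[OF assms] PAut_gr_Const[OF assms])
  show "\<phi> (a ^ n) = \<phi> a ^ n"
    using PAut_gr_Const[OF assms, of 1] by (induction n) (simp_all add: PAut_gr_mult[OF assms])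
qed

definition lin_coeff :: "('a::comm_ring_1 P3 \<Rightarrow> 'a P3) \<Rightarrow> 3 \<Rightarrow> 3 \<Rightarrow> 'a" where
  "lin_coeff \<phi> i j = Poly_Mapping.lookup (\<phi> (Var j)) (var_exp i)"

lemma PAut_gr_Var:
  assumes "\<phi> \<in> PAut_gr br"
  shows "\<phi> (Var j) = lin_form (lin_coeff \<phi> 0 j, lin_coeff \<phi> 1 j, lin_coeff \<phi> 2 j)"
  unfolding lin_coeff_def by (rule homog_1_eq_lin_form[OF PAut_gr_homog[OF assms Var_homog_1]])

lemma PAut_gr_lin_form:
  assumes "\<phi> \<in> PAut_gr br"
  shows "\<phi> (lin_form (c0, c1, c2)) = lin_form
    (lin_coeff \<phi> 0 0 * c0 + lin_coeff \<phi> 0 1 * c1 + lin_coeff \<phi> 0 2 * c2,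
     lin_coeff \<phi> 1 0 * c0 + lin_coeff \<phi> 1 1 * c1 + lin_coeff \<phi> 1 2 * c2,
     lin_coeff \<phi> 2 0 * c0 + lin_coeff \<phi> 2 1 * c1 + lin_coeff \<phi> 2 2 * c2)"
proof -
  have "\<phi> (lin_form (c0, c1, c2)) = Const c0 * \<phi> (Var 0) + Const c1 * \<phi> (Var 1) + Const c2 * \<phi> (Var 2)"
    by (simp add: lin_form_def PAut_gr_add[OF assms] PAut_gr_Const_mult[OF assms])
  then show ?thesis
    by (simp add: PAut_gr_Var[OF assms] lin_form_def Const_add Const_mult algebra_simps)
qed

lemma funpow_lin_form:
  fixes \<phi> :: "'a::comm_ring_1 P3 \<Rightarrow> 'a P3" and f :: "'a \<times> 'a \<times> 'a \<Rightarrow> 'a \<times> 'a \<times> 'a"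
  assumes "\<And>c. \<phi> (lin_form c) = lin_form (f c)"
  shows "(\<phi> ^^ n) (lin_form c) = lin_form ((f ^^ n) c)"
  by (induction n) (simp_all add: assms)

lemma snd_funpow:
  fixes f :: "'a \<times> 'b \<Rightarrow> 'a \<times> 'b" and g :: "'b \<Rightarrow> 'b"
  assumes "\<And>x. snd (f x) = g (snd x)"
  shows "snd ((f ^^ n) x) = (g ^^ n) (snd x)"
  by (induction n) (simp_all add: assms)

lemma det_2x2:
  fixes A :: "'a::comm_ring_1 mat"
  assumes "A \<in> carrier_mat 2 2"
  shows "det A = A $$ (0, 0) * A $$ (1, 1) - A $$ (1, 0) * A $$ (0, 1)"
proof -
  have "det A = (\<Sum>i<2. A $$ (i, 0) * cofactor A i 0)"
    by (rule laplace_expansion_column[OF assms]) simp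
  then show ?thesis using assms
    by (simp add: cofactor_def eval_nat_numeral lessThan_Suc det_single mat_delete_def insert_index_def)
qed

lemma det_3x3:
  fixes A :: "'a::comm_ring_1 mat"
  assumes "A \<in> carrier_mat 3 3"
  shows "det A = A $$ (0, 0) * (A $$ (1, 1) * A $$ (2, 2) - A $$ (2, 1) * A $$ (1, 2))
     - A $$ (1, 0) * (A $$ (0, 1) * A $$ (2, 2) - A $$ (2, 1) * A $$ (0, 2))
     + A $$ (2, 0) * (A $$ (0, 1) * A $$ (1, 2) - A $$ (1, 1) * A $$ (0, 2))"
proof -
  have "det A = (\<Sum>i<3. A $$ (i, 0) * cofactor A i 0)"
    by (rule laplace_expansion_column[OF assms]) simp
  then show ?thesis using assms
    by (simp add: cofactor_def eval_nat_numeral lessThan_Suc det_2x2 mat_delete_def insert_index_def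
        algebra_simps)
qed

lemma char_poly_lin_matrix:
  fixes \<phi> :: "'a::comm_ring_1 P3 \<Rightarrow> 'a P3"
  assumes "lin_coeff \<phi> 1 0 = 0" "lin_coeff \<phi> 2 0 = 0"
  shows "poly (char_poly (lin_matrix \<phi>)) x = (x - lin_coeff \<phi> 0 0) *
    ((x - lin_coeff \<phi> 1 1) * (x - lin_coeff \<phi> 2 2) - lin_coeff \<phi> 2 1 * lin_coeff \<phi> 1 2)"
proof -
  have entry: "poly (char_poly_matrix (lin_matrix \<phi>) $$ (i, j)) x =
    (if i = j then x else 0) - lin_coeff \<phi> (of_nat i) (of_nat j)" if "i < 3" "j < 3" for i j
    using that by (simp add: char_poly_matrix_def lin_matrix_def lin_coeff_def)
  have carrier: "char_poly_matrix (lin_matrix \<phi>) \<in> carrier_mat 3 3"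
    by (simp add: lin_matrix_def)
  show ?thesis unfolding char_poly_def det_3x3[OF carrier]
    by (simp only: poly_mult poly_add poly_diff entry) (simp add: assms)
qed

lemma unipotent_2x2_funpow:
  fixes a b c d :: "'a::comm_ring_1"
  assumes trace: "a + d = 2" and det: "a * d - b * c = 1"
  shows "((\<lambda>(u, v). (a * u + b * v, c * u + d * v)) ^^ n) (u, v) =
    (u + of_nat n * ((a - 1) * u + b * v), v + of_nat n * (c * u + (d - 1) * v))"
proof (induction n)
  case (Suc n)
  define N1 N2 where "N1 = (a - 1) * u + b * v" and "N2 = c * u + (d - 1) * v"
  have "(a - 1) ^ 2 + b * c = a * (a + d - 2) - (a * d - b * c - 1)"
    and "(d - 1) ^ 2 + b * c = d * (a + d - 2) - (a * d - b * c - 1)"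
    by (simp_all add: algebra_simps power2_eq_square)
  then have nilpotent: "(a - 1) ^ 2 + b * c = 0" "(d - 1) ^ 2 + b * c = 0"
    using trace det by simp_all
  have "a * (u + k * N1) + b * (v + k * N2) - (u + (1 + k) * N1)
      = k * u * ((a - 1) ^ 2 + b * c) + k * v * b * (a + d - 2)"
    and "c * (u + k * N1) + d * (v + k * N2) - (v + (1 + k) * N2)
      = k * u * c * (a + d - 2) + k * v * ((d - 1) ^ 2 + b * c)" for k
    by (simp_all add: N1_def N2_def algebra_simps power2_eq_square)
  then have "a * (u + k * N1) + b * (v + k * N2) = u + (1 + k) * N1"
    and "c * (u + k * N1) + d * (v + k * N2) = v + (1 + k) * N2" for k
    by (simp_all add: nilpotent trace)
  with Suc show ?case by (simp add: N1_def N2_def)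
qed simp

lemma unipotent_2x2_finite_order:
  fixes a b c d :: "'a::{idom, ring_char_0}"
  assumes "a + d = 2" "a * d - b * c = 1"
    and "n > 0" "(\<lambda>(u, v). (a * u + b * v, c * u + d * v)) ^^ n = id"
  shows "a = 1 \<and> b = 0 \<and> c = 0 \<and> d = 1"
  using unipotent_2x2_funpow[OF assms(1,2), of n 1 0] unipotent_2x2_funpow[OF assms(1,2), of n 0 1]
    assms(3,4) by simp

lemma char_poly_reflection_coeffs:
  fixes c t \<xi> :: "'a::field_char_0"
  assumes cp: "\<And>x. (x - c) * (x ^ 2 - t * x + c ^ 2) = (x - 1) ^ 2 * (x - \<xi>)"
    and "\<xi> \<noteq> 1" "\<xi> \<noteq> 0"
  shows "c = -1 \<and> t = 2"
proof -
  have cube: "c ^ 3 = \<xi>" using cp[of 0] by (simp add: power2_eq_square power3_eq_cube mult.assoc)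
  have "(c - 1) ^ 2 * (c - \<xi>) = 0" using cp[of c] by simp
  moreover have "c \<noteq> 1" using cube \<open>\<xi> \<noteq> 1\<close> by auto
  ultimately have "c = \<xi>" by simp
  with cube have "\<xi> * (\<xi> - 1) * (\<xi> + 1) = 0" by (simp add: algebra_simps power3_eq_cube)
  with \<open>\<xi> \<noteq> 1\<close> \<open>\<xi> \<noteq> 0\<close> \<open>c = \<xi>\<close> have c: "c = -1" by (simp add: add_eq_0_iff2)
  have "2 * (2 - t) = 0" using cp[of 1] c by (simp add: algebra_simps)
  with c show ?thesis by simp
qed

section \<open>Reflections in normal form\<close>

text \<open>On P_1 the map r is x1 -> -x1, x2 -> x2 + a x1, x3 -> x3 + a' x1.\<close>

locale normal_reflection =
  fixes br :: "'a::field_char_0 P3 \<Rightarrow> 'a P3 \<Rightarrow> 'a P3" and r :: "'a P3 \<Rightarrow> 'a P3" and a a' :: 'a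
  assumes aut: "r \<in> PAut_gr br"
    and lin_form_action: "r (lin_form (c0, c1, c2)) = lin_form (c1 * a + c2 * a' - c0, c1, c2)"
begin

lemma Var_0_action: "r (Var 0) = - Var 0"
  using lin_form_action[of 1 0 0] by (simp add: lin_form_def Const_uminus)

lemma subst_zero_0_action: "subst_zero 0 (r p) = subst_zero 0 p"
proof -
  have lin_form: "subst_zero 0 (r (lin_form c)) = subst_zero 0 (lin_form c)" for c
    by (cases c) (simp add: lin_form_action subst_zero_0_lin_form)
  have "(\<lambda>p. subst_zero 0 (r p)) = subst_zero 0"
  proof (rule P3_hom_eqI)
    show "subst_zero 0 (r (Var i)) = subst_zero 0 (Var i)" for i
      using exhaust_3[of i] lin_form by (auto simp only: Var_eq_lin_form)
  qed (simp_all add: subst_zero_add subst_zero_mult PAut_gr_add[OF aut] PAut_gr_mult[OF aut]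
      PAut_gr_Const[OF aut])
  then show ?thesis by (rule fun_cong)
qed

lemma fixed_point_sqrt:
  assumes fixed: "r u = u" and dvd: "Var 0 ^ 2 dvd u * u"
  obtains w where "r w = w" "u = Var 0 ^ 2 * w"
proof -
  have "Var 0 dvd u * u" using dvd by (rule dvd_trans[rotated]) simp
  then obtain v where v: "u = Var 0 * v" by (auto simp: Var_dvd_mult_iff elim: dvdE)
  have "Var 0 * (r v + v) = 0"
    using fixed by (simp add: v PAut_gr_mult[OF aut] Var_0_action neg_eq_iff_add_eq_0 distrib_left)
  then have "r v = - v" by (simp add: eq_neg_iff_add_eq_0)
  \<comment> \<open>r is the identity modulo x1, so x1 divides v as well\<close>
  then have "subst_zero 0 v = - subst_zero 0 v"
    using subst_zero_0_action[of v] by (simp add: subst_zero_uminus)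
  then have "subst_zero 0 v = 0" by (simp add: eq_neg_iff_add_eq_0 flip: mult_2)
  then obtain w where w: "v = Var 0 * w" by (auto simp flip: Var_dvd_iff_subst_zero elim: dvdE)
  have u: "u = Var 0 ^ 2 * w" by (simp add: v w power2_eq_square)
  have "Var 0 ^ 2 * r w = Var 0 ^ 2 * w"
    using fixed by (simp add: u PAut_gr_mult[OF aut] PAut_gr_power[OF aut] Var_0_action)
  then have "r w = w" using Var_neq_0 by simp
  from this u show thesis by (rule that)
qed

end

lemma normal_reflections_eq:
  assumes r: "normal_reflection br r a a'" and s: "normal_reflection br s b b'"
    and order: "n > 0" "(s \<circ> r) ^^ n = id"
  shows "r = s"
proof -
  define f :: "'a \<times> 'a \<times> 'a \<Rightarrow> 'a \<times> 'a \<times> 'a"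
    where "f = (\<lambda>(c0, c1, c2). (c0 + (c1 * (b - a) + c2 * (b' - a')), c1, c2))"
  have "(s \<circ> r) (lin_form c) = lin_form (f c)" for c
    by (cases c) (simp add: f_def normal_reflection.lin_form_action[OF r]
        normal_reflection.lin_form_action[OF s] algebra_simps)
  then have fixed: "(f ^^ n) c = c" for c
    using funpow_lin_form[of "s \<circ> r" f n c] order(2) by (simp add: lin_form_inject)
  have iterate: "(f ^^ k) (c0, c1, c2) = (c0 + of_nat k * (c1 * (b - a) + c2 * (b' - a')), c1, c2)"
    for k c0 c1 c2
    by (induction k) (simp_all add: f_def algebra_simps)
  have "of_nat n * (b - a) = 0" using fixed[of "(0, 1, 0)"] iterate[of n 0 1 0] by simp
  moreover have "of_nat n * (b' - a') = 0" using fixed[of "(0, 0, 1)"] iterate[of n 0 0 1] by simp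
  ultimately have "b = a" "b' = a'" using order(1) by simp_all
  then have lin_form: "r (lin_form c) = s (lin_form c)" for c
    by (cases c) (simp add: normal_reflection.lin_form_action[OF r] normal_reflection.lin_form_action[OF s])
  have aut: "r \<in> PAut_gr br" "s \<in> PAut_gr br"
    using r s by (simp_all add: normal_reflection_def)
  show "r = s"
  proof (rule P3_hom_eqI)
    show "r (Var i) = s (Var i)" for i
      using exhaust_3[of i] lin_form by (auto simp only: Var_eq_lin_form)
  qed (simp_all add: PAut_gr_add[OF aut(1)] PAut_gr_add[OF aut(2)] PAut_gr_mult[OF aut(1)]
      PAut_gr_mult[OF aut(2)] PAut_gr_Const[OF aut(1)] PAut_gr_Const[OF aut(2)])
qed

lemma gen_by_generator: "r \<in> R \<Longrightarrow> r \<in> gen_by R"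
  using gen_by.gen_step[OF _ gen_by.gen_id] by fastforce

lemma gen_by_comp: "g \<in> gen_by R \<Longrightarrow> h \<in> gen_by R \<Longrightarrow> g \<circ> h \<in> gen_by R"
  by (induction rule: gen_by.induct) (auto simp: comp_assoc intro: gen_by.intros)

lemma gen_by_funpow: "g \<in> gen_by R \<Longrightarrow> g ^^ n \<in> gen_by R"
  by (induction n) (auto intro: gen_by.intros gen_by_comp)

lemma gen_by_empty: "gen_by {} = {id}"
proof -
  have "g = id" if "g \<in> gen_by {}" for g :: "'a \<Rightarrow> 'a"
    using that by (induction rule: gen_by.induct) auto
  then show ?thesis by (auto intro: gen_by.gen_id)
qed

lemma gen_by_finite_order:
  assumes "finite (gen_by R)" "g \<in> gen_by R" "inj g"
  obtains n where "n > 0" "g ^^ n = id"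
proof -
  have "inj ((\<circ>) g)"
    using \<open>inj g\<close> by (auto simp: inj_def fun_eq_iff)
  moreover have "{h. \<exists>n. h = ((\<circ>) g ^^ n) id} \<subseteq> gen_by R"
    using \<open>g \<in> gen_by R\<close> by (auto simp: comp_funpow gen_by_funpow)
  then have "finite {h. \<exists>n. h = ((\<circ>) g ^^ n) id}"
    using assms(1) by (rule finite_subset)
  ultimately obtain n where "n > 0" "((\<circ>) g ^^ n) id = id"
    by (rule funpow_inj_finite)
  with that show thesis by (simp add: comp_funpow)
qed

lemma invariants_gen_by: "invariants (gen_by R) = {p. \<forall>r\<in>R. r p = p}"
proof -
  have "g p = p" if "g \<in> gen_by R" "\<forall>r\<in>R. r p = p" for g p
    using that by (induction rule: gen_by.induct) auto
  then show ?thesis by (auto simp: invariants_def gen_by_generator)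
qed

section \<open>Square roots of bracket multiples\<close>

definition bracket_multiples :: "('a::comm_ring_1 P3 \<Rightarrow> 'a P3 \<Rightarrow> 'a P3) \<Rightarrow> 'a P3 set \<Rightarrow> 'a P3 set" where
  "bracket_multiples br A = {c * br p q | p q c. p \<in> A \<and> q \<in> A \<and> c \<in> A}"

lemma
  assumes "poisson_iso_onto_P br A \<psi>"
  shows poisson_iso_onto_P_bij: "bij_betw \<psi> A UNIV"
    and poisson_iso_onto_P_mult: "p \<in> A \<Longrightarrow> q \<in> A \<Longrightarrow> \<psi> (p * q) = \<psi> p * \<psi> q"
    and poisson_iso_onto_P_br: "p \<in> A \<Longrightarrow> q \<in> A \<Longrightarrow> \<psi> (br p q) = br (\<psi> p) (\<psi> q)"
  using assms unfolding poisson_iso_onto_P_def by blast+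

lemma poisson_iso_bracket_multiples_iff:
  assumes iso: "poisson_iso_onto_P br A \<psi>"
    and mult_closed: "\<And>p q. p \<in> A \<Longrightarrow> q \<in> A \<Longrightarrow> p * q \<in> A"
    and br_closed: "\<And>p q. p \<in> A \<Longrightarrow> q \<in> A \<Longrightarrow> br p q \<in> A"
    and "u \<in> A"
  shows "\<psi> u \<in> bracket_multiples br UNIV \<longleftrightarrow> u \<in> bracket_multiples br A"
proof -
  note bij = poisson_iso_onto_P_bij[OF iso]
  have \<psi>_bracket_multiple: "\<psi> (c * br p q) = \<psi> c * br (\<psi> p) (\<psi> q)" if "p \<in> A" "q \<in> A" "c \<in> A" for p q c
    using that by (simp add: poisson_iso_onto_P_mult[OF iso] poisson_iso_onto_P_br[OF iso] br_closed)
  show ?thesis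
  proof
    assume "\<psi> u \<in> bracket_multiples br UNIV"
    then obtain p q c where "\<psi> u = c * br p q" by (auto simp: bracket_multiples_def)
    moreover have "x \<in> \<psi> ` A" for x using bij by (simp add: bij_betw_def)
    then obtain p' q' c' where "p' \<in> A" "q' \<in> A" "c' \<in> A" "p = \<psi> p'" "q = \<psi> q'" "c = \<psi> c'"
      by (meson imageE)
    ultimately have "\<psi> u = \<psi> (c' * br p' q')" by (simp add: \<psi>_bracket_multiple)
    then have "u = c' * br p' q'"
      using bij \<open>u \<in> A\<close> \<open>p' \<in> A\<close> \<open>q' \<in> A\<close> \<open>c' \<in> A\<close>
      by (auto simp: bij_betw_def inj_on_def intro: mult_closed br_closed)
    with \<open>p' \<in> A\<close> \<open>q' \<in> A\<close> \<open>c' \<in> A\<close> show "u \<in> bracket_multiples br A"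
      by (auto simp: bracket_multiples_def)
  next
    assume "u \<in> bracket_multiples br A"
    then obtain p q c where "u = c * br p q" "p \<in> A" "q \<in> A" "c \<in> A"
      by (auto simp: bracket_multiples_def)
    then have "\<psi> u = \<psi> c * br (\<psi> p) (\<psi> q)" by (simp add: \<psi>_bracket_multiple)
    then show "\<psi> u \<in> bracket_multiples br UNIV" unfolding bracket_multiples_def by blast
  qed
qed

section \<open>The bracket with {x2, x3} = 3 x1^2\<close>

locale cube_bracket =
  fixes br :: "'a::field_char_0 P3 \<Rightarrow> 'a P3 \<Rightarrow> 'a P3"
  assumes poisson: "poisson_bracket br"
    and br_Var_0_1: "br (Var 0) (Var 1) = 0"
    and br_Var_1_2: "br (Var 1) (Var 2) = Const 3 * Var 0 ^ 2"
    and br_Var_2_0: "br (Var 2) (Var 0) = 0"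
begin

lemma br_add_left: "br (p + q) s = br p s + br q s"
  and br_Const_mult_left: "br (Const c * p) q = Const c * br p q"
  and br_antisym: "br p q = - br q p"
  and br_mult_right: "br p (q * s) = br p q * s + q * br p s"
  using poisson unfolding poisson_bracket_def by blast+

lemma br_add_right: "br p (q + s) = br p q + br p s"
  by (metis br_add_left br_antisym minus_add_distrib)

lemma br_Const_mult_right: "br p (Const c * q) = Const c * br p q"
  by (metis br_Const_mult_left br_antisym mult_minus_right)

lemma br_mult_left: "br (p * q) s = br p s * q + p * br q s"
proof -
  have "br (p * q) s = - (br s p * q + p * br s q)" by (simp add: br_antisym[of _ s] br_mult_right)
  then show ?thesis by (simp add: br_antisym[of s])
qed

lemma br_self [simp]: "br p p = 0"
  using br_antisym[of p p] by (simp add: eq_neg_iff_add_eq_0 flip: mult_2)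

lemma br_Const_left [simp]: "br (Const c) p = 0"
proof -
  have "br 1 p = 0" using br_mult_left[of 1 1 p] by simp
  then show ?thesis using br_Const_mult_left[of c 1 p] by simp
qed

lemma br_Const_right [simp]: "br p (Const c) = 0"
  using br_antisym[of p "Const c"] by simp

lemma br_Var_0_left: "br (Var 0) q = 0"
proof (induction q rule: P3_induct)
  case (Var i)
  then show ?case
    using exhaust_3[of i] br_Var_0_1 br_Var_2_0 br_antisym[of "Var 0" "Var 2"] by auto
qed (simp_all add: br_add_right br_mult_right)

lemma br_Var_0_right: "br q (Var 0) = 0"
  using br_antisym[of q "Var 0"] by (simp add: br_Var_0_left)

lemma Var_0_sq_dvd_br: "Var 0 ^ 2 dvd br p q"
proof -
  have Var: "Var 0 ^ 2 dvd br (Var i) q" for i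
  proof (induction q rule: P3_induct)
    case (Var j)
    then show ?case
      using exhaust_3[of i] exhaust_3[of j]
      by (auto simp: br_Var_0_left br_Var_0_right br_Var_1_2 br_antisym[of "Var 2" "Var 1"])
  qed (simp_all add: br_add_right br_mult_right)
  show ?thesis
    by (induction p rule: P3_induct) (simp_all add: Var br_add_left br_mult_left)
qed

lemma br_lin_form:
  "br (lin_form (a0, a1, a2)) (lin_form (b0, b1, b2)) = Const (3 * (a1 * b2 - a2 * b1)) * Var 0 ^ 2"
  by (simp add: lin_form_def br_add_left br_add_right br_Const_mult_left br_Const_mult_right
      br_Var_0_left br_Var_0_right br_Var_1_2 br_antisym[of "Var 2" "Var 1"] Const_mult Const_diff
      algebra_simps)

lemma Var_0_not_in_bracket_multiples: "Var 0 \<notin> bracket_multiples br UNIV"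
proof
  assume "Var 0 \<in> bracket_multiples br UNIV"
  then obtain p q c where "c * br p q = Var 0" by (auto simp: bracket_multiples_def)
  moreover have "Var 0 ^ 2 dvd c * br p q" by (rule dvd_mult[OF Var_0_sq_dvd_br])
  ultimately have "Var 0 ^ 2 dvd (Var 0 :: 'a P3)" by (simp only:)
  then show False by (simp add: power2_eq_square Var_not_dvd_one)
qed

lemma Var_0_sq_in_bracket_multiples: "Var 0 * Var 0 \<in> bracket_multiples br UNIV"
proof -
  have "Var 0 * Var 0 = Const (1 / 3) * br (Var 1) (Var 2)"
    by (simp add: br_Var_1_2 power2_eq_square mult.assoc flip: Const_mult)
  then show ?thesis by (auto simp: bracket_multiples_def)
qed

lemma PAut_gr_Var_0_coeffs:
  assumes "\<phi> \<in> PAut_gr br"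
  shows "lin_coeff \<phi> 1 0 = 0" "lin_coeff \<phi> 2 0 = 0"
proof -
  have "br (\<phi> (Var 0)) (\<phi> q) = 0" for q
    by (simp only: PAut_gr_br[OF assms, symmetric] br_Var_0_left PAut_gr_zero[OF assms])
  then have central: "br (\<phi> (Var 0)) q = 0" for q
    using surj_f_inv_f[OF bij_is_surj[OF PAut_gr_bij[OF assms]], of q] by metis
  show "lin_coeff \<phi> 1 0 = 0"
    using central[of "lin_form (0, 0, 1)"] by (simp add: PAut_gr_Var[OF assms] br_lin_form)
  show "lin_coeff \<phi> 2 0 = 0"
    using central[of "lin_form (0, 1, 0)"] by (simp add: PAut_gr_Var[OF assms] br_lin_form)
qed

lemma PAut_gr_det:
  assumes "\<phi> \<in> PAut_gr br"
  shows "lin_coeff \<phi> 1 1 * lin_coeff \<phi> 2 2 - lin_coeff \<phi> 2 1 * lin_coeff \<phi> 1 2 = lin_coeff \<phi> 0 0 ^ 2"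
proof -
  have Var_0: "\<phi> (Var 0) = Const (lin_coeff \<phi> 0 0) * Var 0"
    using PAut_gr_Var[OF assms, of 0] PAut_gr_Var_0_coeffs[OF assms] by (simp add: lin_form_def)
  have "Const (3 * (lin_coeff \<phi> 1 1 * lin_coeff \<phi> 2 2 - lin_coeff \<phi> 2 1 * lin_coeff \<phi> 1 2)) * Var 0 ^ 2
      = br (\<phi> (Var 1)) (\<phi> (Var 2))"
    by (simp only: PAut_gr_Var[OF assms] br_lin_form)
  also have "\<dots> = \<phi> (Const 3 * Var 0 ^ 2)"
    by (simp only: PAut_gr_br[OF assms, symmetric] br_Var_1_2)
  also have "\<dots> = Const (3 * lin_coeff \<phi> 0 0 ^ 2) * Var 0 ^ 2"
    by (simp only: PAut_gr_Const_mult[OF assms] PAut_gr_power[OF assms] Var_0 power_mult_distrib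
        Const_power[symmetric] Const_mult mult.assoc)
  finally show ?thesis unfolding Const_mult_Var_power_eq_iff by (subst (asm) mult_left_cancel) simp_all
qed

lemma reflection_lin_coeffs:
  assumes aut: "r \<in> PAut_gr br" and "\<xi> \<noteq> 1" "\<xi> \<noteq> 0"
    and cp: "char_poly (lin_matrix r) = [:-1, 1:] ^ 2 * [:-\<xi>, 1:]"
  shows "lin_coeff r 0 0 = -1" "lin_coeff r 1 1 + lin_coeff r 2 2 = 2"
    "lin_coeff r 1 1 * lin_coeff r 2 2 - lin_coeff r 1 2 * lin_coeff r 2 1 = 1"
proof -
  define c where "c = lin_coeff r"
  have col_0: "c 1 0 = 0" "c 2 0 = 0" using PAut_gr_Var_0_coeffs[OF aut] by (simp_all add: c_def)
  have det: "c 1 1 * c 2 2 - c 2 1 * c 1 2 = c 0 0 ^ 2" using PAut_gr_det[OF aut] by (simp add: c_def)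
  have "(x - c 0 0) * (x ^ 2 - (c 1 1 + c 2 2) * x + c 0 0 ^ 2) = (x - 1) ^ 2 * (x - \<xi>)" for x
  proof -
    have "(x - c 1 1) * (x - c 2 2) - c 2 1 * c 1 2 = x ^ 2 - (c 1 1 + c 2 2) * x + c 0 0 ^ 2"
      unfolding det[symmetric] by (simp add: algebra_simps power2_eq_square)
    moreover have "poly (char_poly (lin_matrix r)) x = (x - 1) ^ 2 * (x - \<xi>)"
      by (simp add: cp algebra_simps)
    moreover have "poly (char_poly (lin_matrix r)) x
        = (x - c 0 0) * ((x - c 1 1) * (x - c 2 2) - c 2 1 * c 1 2)"
      using char_poly_lin_matrix[of r x] col_0 by (simp add: c_def)
    ultimately show ?thesis by simp
  qed
  then have "c 0 0 = -1" "c 1 1 + c 2 2 = 2"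
    using char_poly_reflection_coeffs assms(2,3) by blast+
  with det show "lin_coeff r 0 0 = -1" "lin_coeff r 1 1 + lin_coeff r 2 2 = 2"
    "lin_coeff r 1 1 * lin_coeff r 2 2 - lin_coeff r 1 2 * lin_coeff r 2 1 = 1"
    by (simp_all add: c_def mult.commute)
qed

lemma reflection_normal_form:
  assumes "poisson_reflection br r"
  obtains a a' where "normal_reflection br r a a'"
proof -
  obtain n \<xi> k where aut: "r \<in> PAut_gr br" and order: "n > 0" "r ^^ n = id"
    and \<xi>: "\<xi> \<noteq> 1" "k > 0" "\<xi> ^ k = 1"
    and cp: "char_poly (lin_matrix r) = [:-1, 1:] ^ 2 * [:-\<xi>, 1:]"
    using assms unfolding poisson_reflection_def by blast
  have "\<xi> \<noteq> 0" using \<xi>(2,3) by (auto simp: zero_power)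
  define c where "c = lin_coeff r"
  note coeffs = reflection_lin_coeffs[OF aut \<xi>(1) \<open>\<xi> \<noteq> 0\<close> cp, folded c_def]
  note col_0 = PAut_gr_Var_0_coeffs[OF aut, folded c_def]
  define f :: "'a \<times> 'a \<times> 'a \<Rightarrow> 'a \<times> 'a \<times> 'a"
    where "f = (\<lambda>(c0, c1, c2). (c 0 1 * c1 + c 0 2 * c2 - c0, c 1 1 * c1 + c 1 2 * c2, c 2 1 * c1 + c 2 2 * c2))"
  define g where "g = (\<lambda>(u, v). (c 1 1 * u + c 1 2 * v, c 2 1 * u + c 2 2 * v))"
  have action: "r (lin_form x) = lin_form (f x)" for x
    by (cases x) (simp add: PAut_gr_lin_form[OF aut] f_def c_def[symmetric] col_0 coeffs(1) algebra_simps)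
  have "(f ^^ n) x = x" for x
    using funpow_lin_form[of r f, OF action, of n x] order(2) by (simp add: lin_form_inject)
  moreover have "snd ((f ^^ n) x) = (g ^^ n) (snd x)" for x
    by (rule snd_funpow) (auto simp: f_def g_def split: prod.split)
  ultimately have "(g ^^ n) y = y" for y by (metis snd_conv)
  then have "g ^^ n = id" by auto
  \<comment> \<open>g is the action modulo x1: unipotent by the characteristic polynomial, of finite order\<close>
  then have "c 1 1 = 1 \<and> c 1 2 = 0 \<and> c 2 1 = 0 \<and> c 2 2 = 1"
    using unipotent_2x2_finite_order[of "c 1 1" "c 2 2" "c 1 2" "c 2 1"] coeffs(2,3) order(1)
    unfolding g_def by simp
  then have "normal_reflection br r (c 0 1) (c 0 2)"
    using aut action by unfold_locales (simp_all add: f_def mult.commute)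
  then show thesis by (rule that)
qed

lemma reflections_gen_by_eq:
  assumes "finite (gen_by R)" "\<forall>r\<in>R. poisson_reflection br r" "r \<in> R" "s \<in> R"
  shows "r = s"
proof -
  obtain a a' where r: "normal_reflection br r a a'"
    using assms(2,3) reflection_normal_form by blast
  obtain b b' where s: "normal_reflection br s b b'"
    using assms(2,4) reflection_normal_form by blast
  have "s \<circ> r \<in> gen_by R" using assms(3,4) by (simp add: gen_by_comp gen_by_generator)
  moreover have "inj (s \<circ> r)"
    using PAut_gr_bij[OF normal_reflection.aut[OF r]] PAut_gr_bij[OF normal_reflection.aut[OF s]]
    by (simp add: bij_is_inj inj_compose)
  ultimately obtain n where "n > 0" "(s \<circ> r) ^^ n = id"
    by (rule gen_by_finite_order[OF assms(1)])
  then show ?thesis using normal_reflections_eq[OF r s] by blast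
qed

lemma not_poisson_iso_onto_P_if_sqrt_closed:
  assumes mult_closed: "\<And>p q. p \<in> A \<Longrightarrow> q \<in> A \<Longrightarrow> p * q \<in> A"
    and br_closed: "\<And>p q. p \<in> A \<Longrightarrow> q \<in> A \<Longrightarrow> br p q \<in> A"
    and sqrt_closed:
      "\<And>u. u \<in> A \<Longrightarrow> u * u \<in> bracket_multiples br A \<Longrightarrow> u \<in> bracket_multiples br A"
  shows "\<not> poisson_iso_onto_P br A \<psi>"
proof
  assume iso: "poisson_iso_onto_P br A \<psi>"
  have iff: "\<psi> v \<in> bracket_multiples br UNIV \<longleftrightarrow> v \<in> bracket_multiples br A" if "v \<in> A" for v
    by (rule poisson_iso_bracket_multiples_iff[OF iso]) (simp_all add: mult_closed br_closed that)
  have "Var 0 \<in> \<psi> ` A" using poisson_iso_onto_P_bij[OF iso] by (simp add: bij_betw_def)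
  then obtain u where u: "u \<in> A" "\<psi> u = Var 0" by (metis imageE)
  have "\<psi> (u * u) \<in> bracket_multiples br UNIV"
    using Var_0_sq_in_bracket_multiples by (simp only: poisson_iso_onto_P_mult[OF iso u(1) u(1)] u(2))
  then have "u \<in> bracket_multiples br A"
    using iff[OF mult_closed[OF u(1) u(1)]] sqrt_closed[OF u(1)] by blast
  then have "Var 0 \<in> bracket_multiples br UNIV" using iff[OF u(1)] u(2) by simp
  with Var_0_not_in_bracket_multiples show False by blast
qed

lemma fixed_points_sqrt_closed:
  assumes "normal_reflection br r a a'" and fixed: "r u = u"
    and square: "u * u \<in> bracket_multiples br {p. r p = p}"
  shows "u \<in> bracket_multiples br {p. r p = p}"
proof -
  interpret normal_reflection br r a a' by (fact assms(1))
  obtain p q s where "u * u = s * br p q" using square by (auto simp: bracket_multiples_def)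
  then have "Var 0 ^ 2 dvd u * u" by (simp add: Var_0_sq_dvd_br)
  with fixed obtain w where w: "r w = w" "u = Var 0 ^ 2 * w" by (rule fixed_point_sqrt)
  define y z where "y = lin_form (a / 2, 1, 0)" and "z = lin_form (a' / 2, 0, 1)"
  have "r y = y" "r z = z" by (simp_all add: y_def z_def lin_form_action)
  moreover have "r (Const (1 / 3) * w) = Const (1 / 3) * w" by (simp add: w(1) PAut_gr_Const_mult[OF aut])
  moreover have "u = Const (1 / 3) * w * br y z"
  proof -
    have "Const (1 / 3) * w * br y z = (Const (1 / 3) * Const 3) * (Var 0 ^ 2 * w)"
      by (simp only: y_def z_def br_lin_form mult_ac) simp
    also have "Const (1 / 3) * Const 3 = (1 :: 'a P3)" by (simp flip: Const_mult)
    finally show ?thesis using w(2) by (simp only: mult_1_left)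
  qed
  ultimately show ?thesis unfolding bracket_multiples_def by blast
qed

lemma no_poisson_iso_onto_P_fixed_points:
  assumes "normal_reflection br r a a'"
  shows "\<not> poisson_iso_onto_P br {p. r p = p} \<psi>"
proof (rule not_poisson_iso_onto_P_if_sqrt_closed)
  have aut: "r \<in> PAut_gr br" using assms by (rule normal_reflection.aut)
  show "p * q \<in> {p. r p = p}" "br p q \<in> {p. r p = p}" if "p \<in> {p. r p = p}" "q \<in> {p. r p = p}" for p q
    using that by (simp_all add: PAut_gr_mult[OF aut] PAut_gr_br[OF aut])
qed (use assms fixed_points_sqrt_closed in blast)

end

theorem lemma3p1p2:
  fixes br :: "'a::field_char_0 P3 \<Rightarrow> 'a P3 \<Rightarrow> 'a P3"
    and G :: "('a P3 \<Rightarrow> 'a P3) set"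
  assumes alg_closed: "\<And>p :: 'a poly. degree p > 0 \<Longrightarrow> \<exists>x. poly p x = 0"
    and pb: "poisson_bracket br"
    and b12: "br (Var 0) (Var 1) = 0"
    and b23: "br (Var 1) (Var 2) = Const 3 * Var 0 ^ 2"
    and b31: "br (Var 2) (Var 0) = 0"
    and gen: "\<exists>R. (\<forall>r\<in>R. poisson_reflection br r) \<and> G = gen_by R"
    and fin: "finite G"
    and nontriv: "G \<noteq> {id}"
  shows "\<not> (\<exists>\<psi>. poisson_iso_onto_P br (invariants G) \<psi>)"
proof -
  interpret cube_bracket br using pb b12 b23 b31 by unfold_locales
  obtain R where R: "\<forall>r\<in>R. poisson_reflection br r" and G: "G = gen_by R"
    using gen by blast
  have "R \<noteq> {}" using nontriv G gen_by_empty by auto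
  then obtain r where "r \<in> R" by blast
  then have "R = {r}" using reflections_gen_by_eq[OF fin[unfolded G] R] by blast
  then have "invariants G = {p. r p = p}" by (simp add: G invariants_gen_by)
  moreover obtain a a' where "normal_reflection br r a a'"
    using R \<open>r \<in> R\<close> reflection_normal_form by blast
  ultimately show ?thesis using no_poisson_iso_onto_P_fixed_points by simp
qed

end
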